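(* Let $p\leq q$, let $0\leq a_1\leq\dots\leq a_p$, and let $L(s)=L_a(s)$ be an H-curve in $\mathrm{Gr}_{p,q}$ with invariants $a_1,\dots,a_p$. Let $s_1<s_2<s_3$ be such that the points $L(s_1),L(s_2),L(s_3)$ are pairwise sufficiently near on this curve. Then for all $j=1,\dots,p$, $$\Psi_j[L(s_1),L(s_2)]+\Psi_j[L(s_2),L(s_3)]=\Psi_j[L(s_1),L(s_3)].$$
   Context: $\mathrm{Gr}_{p,q}$ is the set of $p$-dimensional linear subspaces of $\mathbb{R}^{p+q}$ with the standard scalar product. Jordan angles: for $L,M\in\mathrm{Gr}_{p,q}$ with orthonormal bases $e_i$ of $L$, $f_j$ of $M$, let $\lambda_1\geq\dots\geq\lambda_p$ be the singular values of $(\langle e_i,f_j\rangle)$ and $\Psi_j[L,M]=\arccos\lambda_j$. H-curve: given $0\leq a_1\leq\dots\leq a_p$ and an orthonormal basis $e_1,\dots,e_p,f_1,\dots,f_p,r_1,\dots,r_{q-p}$ of $\mathbb{R}^{p+q}$, $L_a(s)$ is the span of $v_j(s)=\cos(a_js)e_j+\sin(a_js)f_j$, $j=1,\dots,p$; the $a_j$ are the invariants of the curve. Points $L_a(s),L_a(t)$ are sufficiently near if $a_p|s-t|\leq\pi/2$. *)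

theory Defs
  imports "HOL-Analysis.Analysis"
begin

definition orthonormal_basis_of :: "nat \<Rightarrow> (real ^ 'n) set \<Rightarrow> (nat \<Rightarrow> real ^ 'n) \<Rightarrow> bool" where
  "orthonormal_basis_of k L e \<longleftrightarrow>
     (\<forall>i<k. \<forall>j<k. e i \<bullet> e j = (if i = j then 1 else 0)) \<and> span (e ` {..<k}) = L"

text \<open>The Grassmannian Gr_{p,q}: p-dimensional linear subspaces of R^(p+q) (here real^'n, CARD('n) = p+q).\<close>
definition Gr :: "nat \<Rightarrow> (real ^ 'n) set set" where
  "Gr p = {L. subspace L \<and> dim L = p}"

definition is_singular_values :: "nat \<Rightarrow> (nat \<Rightarrow> nat \<Rightarrow> real) \<Rightarrow> (nat \<Rightarrow> real) \<Rightarrow> bool" where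
  "is_singular_values k A \<sigma> \<longleftrightarrow>
     (\<forall>i<k. 0 \<le> \<sigma> i) \<and> (\<forall>i j. i < j \<and> j < k \<longrightarrow> \<sigma> j \<le> \<sigma> i) \<and> (\<forall>i\<ge>k. \<sigma> i = 0) \<and>
     (\<exists>U V. (\<forall>i<k. \<forall>j<k. (\<Sum>l<k. U l i * U l j) = (if i = j then 1 else 0)) \<and>
            (\<forall>i<k. \<forall>j<k. (\<Sum>l<k. V l i * V l j) = (if i = j then 1 else 0)) \<and>
            (\<forall>i<k. \<forall>j<k. A i j = (\<Sum>l<k. U i l * \<sigma> l * V j l)))"

definition singular_values :: "nat \<Rightarrow> (nat \<Rightarrow> nat \<Rightarrow> real) \<Rightarrow> nat \<Rightarrow> real" where
  "singular_values k A = (THE \<sigma>. is_singular_values k A \<sigma>)"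

text \<open>Jordan angle Psi_j[L,M] for j = 1..p (1-based), computed from (arbitrarily chosen)
  orthonormal bases of L and M: arccos of the j-th largest singular value of (<e_i, f_j>).\<close>
definition jordan_angle :: "nat \<Rightarrow> nat \<Rightarrow> (real ^ 'n) set \<Rightarrow> (real ^ 'n) set \<Rightarrow> real" where
  "jordan_angle p j L M =
     (let e = (SOME e. orthonormal_basis_of p L e);
          f = (SOME f. orthonormal_basis_of p M f)
      in arccos (singular_values p (\<lambda>i l. e i \<bullet> f l) (j - 1)))"

text \<open>The family e_1..e_p, f_1..f_p, r_1..r_(q-p), enumerated as b 1, ..., b (p+q).\<close>
definition frame_fam :: "nat \<Rightarrow> (nat \<Rightarrow> real ^ 'n) \<Rightarrow> (nat \<Rightarrow> real ^ 'n) \<Rightarrow> (nat \<Rightarrow> real ^ 'n) \<Rightarrow> nat \<Rightarrow> real ^ 'n" where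
  "frame_fam p e f r k = (if k \<le> p then e k else if k \<le> 2 * p then f (k - p) else r (k - 2 * p))"

definition is_orthonormal_frame :: "nat \<Rightarrow> nat \<Rightarrow> (nat \<Rightarrow> real ^ 'n) \<Rightarrow> (nat \<Rightarrow> real ^ 'n) \<Rightarrow> (nat \<Rightarrow> real ^ 'n) \<Rightarrow> bool" where
  "is_orthonormal_frame p q e f r \<longleftrightarrow>
     (\<forall>i\<in>{1..p+q}. \<forall>j\<in>{1..p+q}. frame_fam p e f r i \<bullet> frame_fam p e f r j = (if i = j then 1 else 0)) \<and>
     span (frame_fam p e f r ` {1..p+q}) = UNIV"

definition H_curve :: "nat \<Rightarrow> (nat \<Rightarrow> real) \<Rightarrow> (nat \<Rightarrow> real ^ 'n) \<Rightarrow> (nat \<Rightarrow> real ^ 'n) \<Rightarrow> real \<Rightarrow> (real ^ 'n) set" where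
  "H_curve p a e f s = span ((\<lambda>j. cos (a j * s) *\<^sub>R e j + sin (a j * s) *\<^sub>R f j) ` {1..p})"

definition sufficiently_near :: "nat \<Rightarrow> (nat \<Rightarrow> real) \<Rightarrow> real \<Rightarrow> real \<Rightarrow> bool" where
  "sufficiently_near p a s t \<longleftrightarrow> a p * \<bar>s - t\<bar> \<le> pi / 2"

end

theory Submission
  imports Defs "Jordan_Normal_Form.Char_Poly"
begin

(* The vectors v_j(s) = cos(a_j s) e_j + sin(a_j s) f_j form an orthonormal basis of L(s), and
   <v_i(s), v_j(t)> = delta_ij cos(a_j (t - s)). Hence for arbitrary orthonormal bases of L(s) and
   L(t) the matrix of inner products factors as U diag(cos(a_j (t - s))) V^T with orthogonal U, V.
   When a_p |t - s| <= pi/2 these cosines are nonnegative and decreasing, so they are the singular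
   values and Psi_j[L(s), L(t)] = a_j |t - s|, which is additive along the curve. The singular
   values are well defined because their squares are the roots, with multiplicity, of the
   characteristic polynomial of A^T A. *)

definition square_mat :: "nat \<Rightarrow> (nat \<Rightarrow> nat \<Rightarrow> 'a) \<Rightarrow> 'a mat" where
  "square_mat k A = Matrix.mat k k (\<lambda>(i, j). A i j)"

definition diagonal_mat_of :: "nat \<Rightarrow> (nat \<Rightarrow> 'a::zero) \<Rightarrow> 'a mat" where
  "diagonal_mat_of k \<sigma> = Matrix.mat k k (\<lambda>(i, j). if i = j then \<sigma> i else 0)"

lemma square_mat_carrier [simp]: "square_mat k A \<in> carrier_mat k k"
  by (simp add: square_mat_def)

lemma dim_square_mat [simp]: "dim_row (square_mat k A) = k" "dim_col (square_mat k A) = k"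
  by (simp_all add: square_mat_def)

lemma index_square_mat [simp]: "i < k \<Longrightarrow> j < k \<Longrightarrow> square_mat k A $$ (i, j) = A i j"
  by (simp add: square_mat_def)

lemma diagonal_mat_of_carrier [simp]: "diagonal_mat_of k \<sigma> \<in> carrier_mat k k"
  by (simp add: diagonal_mat_of_def)

lemma dim_diagonal_mat_of [simp]: "dim_row (diagonal_mat_of k \<sigma>) = k" "dim_col (diagonal_mat_of k \<sigma>) = k"
  by (simp_all add: diagonal_mat_of_def)

lemma transpose_diagonal_mat_of [simp]: "transpose_mat (diagonal_mat_of k \<sigma>) = diagonal_mat_of k \<sigma>"
  by (rule eq_matI) (auto simp: diagonal_mat_of_def)

lemma index_mult_diagonal_mat_of:
  fixes M :: "'a::comm_semiring_0 mat"
  assumes "dim_col M = k" "i < dim_row M" "j < k"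
  shows "(M * diagonal_mat_of k \<sigma>) $$ (i, j) = M $$ (i, j) * \<sigma> j"
proof -
  have "(M * diagonal_mat_of k \<sigma>) $$ (i, j) = (\<Sum>l\<in>{0..<k}. M $$ (i, l) * (if l = j then \<sigma> j else 0))"
    using assms by (auto simp: scalar_prod_def diagonal_mat_of_def intro!: sum.cong)
  also have "\<dots> = M $$ (i, j) * \<sigma> j"
    using assms by (simp add: if_distrib sum.delta' cong: if_cong)
  finally show ?thesis .
qed

lemma diagonal_mat_of_mult:
  fixes \<sigma> \<tau> :: "nat \<Rightarrow> 'a::comm_semiring_0"
  shows "diagonal_mat_of k \<sigma> * diagonal_mat_of k \<tau> = diagonal_mat_of k (\<lambda>i. \<sigma> i * \<tau> i)"
proof (rule eq_matI)
  fix i j assume "i < dim_row (diagonal_mat_of k (\<lambda>i. \<sigma> i * \<tau> i))"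
    and "j < dim_col (diagonal_mat_of k (\<lambda>i. \<sigma> i * \<tau> i))"
  then show "(diagonal_mat_of k \<sigma> * diagonal_mat_of k \<tau>) $$ (i, j) = diagonal_mat_of k (\<lambda>i. \<sigma> i * \<tau> i) $$ (i, j)"
    by (subst index_mult_diagonal_mat_of) (auto simp: diagonal_mat_of_def)
qed auto

lemma transpose_square_mat_mult_self:
  fixes U :: "nat \<Rightarrow> nat \<Rightarrow> 'a::comm_semiring_1"
  assumes "\<forall>i<k. \<forall>j<k. (\<Sum>l<k. U l i * U l j) = (if i = j then 1 else 0)"
  shows "transpose_mat (square_mat k U) * square_mat k U = 1\<^sub>m k"
  by (rule eq_matI) (use assms in \<open>auto simp: scalar_prod_def atLeast0LessThan\<close>)

lemma square_mat_eq_svd: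
  fixes A U V :: "nat \<Rightarrow> nat \<Rightarrow> 'a::comm_semiring_0"
  assumes "\<forall>i<k. \<forall>j<k. A i j = (\<Sum>l<k. U i l * \<sigma> l * V j l)"
  shows "square_mat k A = square_mat k U * diagonal_mat_of k \<sigma> * transpose_mat (square_mat k V)"
proof (rule eq_matI)
  fix i j assume "i < dim_row (square_mat k U * diagonal_mat_of k \<sigma> * transpose_mat (square_mat k V))"
    and "j < dim_col (square_mat k U * diagonal_mat_of k \<sigma> * transpose_mat (square_mat k V))"
  then have ij: "i < k" "j < k" by auto
  have "(square_mat k U * diagonal_mat_of k \<sigma> * transpose_mat (square_mat k V)) $$ (i, j)
      = (\<Sum>l\<in>{0..<k}. (square_mat k U * diagonal_mat_of k \<sigma>) $$ (i, l) * V j l)"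
    using ij by (subst index_mult_mat) (auto simp: scalar_prod_def simp del: index_mult_mat(1))
  also have "\<dots> = (\<Sum>l\<in>{0..<k}. U i l * \<sigma> l * V j l)"
    using ij by (intro sum.cong) (simp_all add: index_mult_diagonal_mat_of del: index_mult_mat(1))
  finally have "(square_mat k U * diagonal_mat_of k \<sigma> * transpose_mat (square_mat k V)) $$ (i, j)
      = (\<Sum>l\<in>{0..<k}. U i l * \<sigma> l * V j l)" .
  then show "square_mat k A $$ (i, j)
      = (square_mat k U * diagonal_mat_of k \<sigma> * transpose_mat (square_mat k V)) $$ (i, j)"
    using ij assms by (simp add: atLeast0LessThan)
qed auto

lemma char_poly_gram_svd:
  assumes "is_singular_values k A \<sigma>"
  shows "char_poly (transpose_mat (square_mat k A) * square_mat k A)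
    = (\<Prod>l\<leftarrow>[0..<k]. [:- ((\<sigma> l)\<^sup>2), 1:])"
proof -
  obtain U V where
    U: "\<forall>i<k. \<forall>j<k. (\<Sum>l<k. U l i * U l j) = (if i = j then 1 else 0)" and
    V: "\<forall>i<k. \<forall>j<k. (\<Sum>l<k. V l i * V l j) = (if i = j then 1 else 0)" and
    A: "\<forall>i<k. \<forall>j<k. A i j = (\<Sum>l<k. U i l * \<sigma> l * V j l)"
    using assms unfolding is_singular_values_def by (elim conjE exE) (rule that)
  define Um Vm D where "Um = square_mat k U" and "Vm = square_mat k V" and "D = diagonal_mat_of k \<sigma>"
  have k_mult: "X * Y \<in> carrier_mat k k" "X * Y * Z = X * (Y * Z)"
    if "X \<in> carrier_mat k k" "Y \<in> carrier_mat k k" "Z \<in> carrier_mat k k" for X Y Z :: "real mat"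
    using that by auto
  have carrier: "Um \<in> carrier_mat k k" "Vm \<in> carrier_mat k k" "D \<in> carrier_mat k k"
    "transpose_mat Um \<in> carrier_mat k k" "transpose_mat Vm \<in> carrier_mat k k"
    by (simp_all add: Um_def Vm_def D_def)
  have UtU: "transpose_mat Um * Um = 1\<^sub>m k" and VtV: "transpose_mat Vm * Vm = 1\<^sub>m k"
    unfolding Um_def Vm_def using U V by (simp_all add: transpose_square_mat_mult_self)
  have VVt: "Vm * transpose_mat Vm = 1\<^sub>m k"
    by (rule mat_mult_left_right_inverse[OF carrier(5,2) VtV])
  have "square_mat k A = Um * D * transpose_mat Vm"
    unfolding Um_def Vm_def D_def using A by (rule square_mat_eq_svd)
  moreover have "transpose_mat Um * (Um * X) = X" if "X \<in> carrier_mat k k" for X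
    using carrier that by (simp flip: k_mult(2) add: UtU)
  moreover have "D * (D * X) = diagonal_mat_of k (\<lambda>l. (\<sigma> l)\<^sup>2) * X" if "X \<in> carrier_mat k k" for X
  proof -
    have "D * D = diagonal_mat_of k (\<lambda>l. (\<sigma> l)\<^sup>2)"
      by (simp add: D_def diagonal_mat_of_mult power2_eq_square)
    then show ?thesis
      using carrier that by (simp flip: k_mult(2))
  qed
  moreover have "transpose_mat D = D"
    by (simp add: D_def)
  ultimately have "transpose_mat (square_mat k A) * square_mat k A
      = Vm * (diagonal_mat_of k (\<lambda>l. (\<sigma> l)\<^sup>2) * transpose_mat Vm)"
    using carrier by (simp add: transpose_mult[of _ k k _ k] k_mult)
  then have "similar_mat (transpose_mat (square_mat k A) * square_mat k A) (diagonal_mat_of k (\<lambda>l. (\<sigma> l)\<^sup>2))"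
    using carrier VVt VtV by (intro similar_matI[of _ _ Vm "transpose_mat Vm" k]) (auto simp: k_mult)
  then have "char_poly (transpose_mat (square_mat k A) * square_mat k A)
      = char_poly (diagonal_mat_of k (\<lambda>l. (\<sigma> l)\<^sup>2))"
    by (rule char_poly_similar)
  also have "\<dots> = (\<Prod>x\<leftarrow>diag_mat (diagonal_mat_of k (\<lambda>l. (\<sigma> l)\<^sup>2)). [:- x, 1:])"
    by (rule char_poly_upper_triangular[of _ k]) (auto simp: upper_triangular_def diagonal_mat_of_def)
  also have "diag_mat (diagonal_mat_of k (\<lambda>l. (\<sigma> l)\<^sup>2)) = map (\<lambda>l. (\<sigma> l)\<^sup>2) [0..<k]"
    by (auto simp: diag_mat_def diagonal_mat_of_def intro: nth_equalityI)
  finally show ?thesis by (simp add: o_def)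
qed

lemma order_prod_list_linear:
  "order c (\<Prod>x\<leftarrow>xs. [:- x, 1:]) = count (mset xs) (c::'a::idom)"
proof (induction xs)
  case Nil
  then show ?case by (simp add: order_0I)
next
  case (Cons x xs)
  have "(\<Prod>x\<leftarrow>xs. [:- x, 1:]) \<noteq> 0"
    by (auto simp: prod_list_zero_iff)
  then have "[:- x, 1:] * (\<Prod>x\<leftarrow>xs. [:- x, 1:]) \<noteq> 0"
    by (rule no_zero_divisors[rotated]) simp
  from order_mult[OF this]
  have "order c (\<Prod>x\<leftarrow>x # xs. [:- x, 1:]) = order c [:- x, 1:] + order c (\<Prod>x\<leftarrow>xs. [:- x, 1:])"
    by (simp only: list.map prod_list.Cons)
  then show ?case
    using Cons.IH order_linear'[of c "- x"] by simp
qed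

lemma mset_eq_if_prod_list_linear_eq:
  fixes xs ys :: "'a::idom list"
  assumes "(\<Prod>x\<leftarrow>xs. [:- x, 1:]) = (\<Prod>x\<leftarrow>ys. [:- x, 1:])"
  shows "mset xs = mset ys"
  by (rule multiset_eqI) (metis assms order_prod_list_linear)

lemma is_singular_values_unique:
  assumes \<sigma>: "is_singular_values k A \<sigma>" and \<tau>: "is_singular_values k A \<tau>"
  shows "\<sigma> = \<tau>"
proof
  fix l
  have "mset (map (\<lambda>l. (\<sigma> l)\<^sup>2) [0..<k]) = mset (map (\<lambda>l. (\<tau> l)\<^sup>2) [0..<k])"
    by (rule mset_eq_if_prod_list_linear_eq)
      (use char_poly_gram_svd[OF \<sigma>] char_poly_gram_svd[OF \<tau>] in \<open>simp add: o_def\<close>)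
  from arg_cong[OF this, of "image_mset uminus"]
  have mset_eq: "mset (map (\<lambda>l. - (\<sigma> l)\<^sup>2) [0..<k]) = mset (map (\<lambda>l. - (\<tau> l)\<^sup>2) [0..<k])"
    by (simp add: multiset.map_comp o_def)
  have sorted: "sorted (map (\<lambda>l. - (\<rho> l)\<^sup>2) [0..<k])" if "is_singular_values k A \<rho>" for \<rho>
    using that unfolding is_singular_values_def sorted_iff_nth_mono_less
    by (auto intro!: power_mono)
  have "map (\<lambda>l. - (\<sigma> l)\<^sup>2) [0..<k] = map (\<lambda>l. - (\<tau> l)\<^sup>2) [0..<k]"
    using properties_for_sort[OF mset_eq sorted[OF \<sigma>]] sorted_sort_id[OF sorted[OF \<tau>]] by simp
  show "\<sigma> l = \<tau> l"
  proof (cases "l < k")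
    case True
    with \<open>map _ _ = map _ _\<close> have "(\<sigma> l)\<^sup>2 = (\<tau> l)\<^sup>2"
      by (metis add_0 diff_zero neg_equal_iff_equal nth_map_upt)
    moreover have "0 \<le> \<sigma> l" "0 \<le> \<tau> l"
      using \<sigma> \<tau> True unfolding is_singular_values_def by auto
    ultimately show ?thesis
      by simp
  next
    case False
    then show ?thesis
      using \<sigma> \<tau> unfolding is_singular_values_def by auto
  qed
qed

lemma singular_values_eqI: "is_singular_values k A \<sigma> \<Longrightarrow> singular_values k A = \<sigma>"
  unfolding singular_values_def by (blast intro: is_singular_values_unique)

lemma is_singular_valuesI:
  assumes "\<And>i. i < k \<Longrightarrow> 0 \<le> \<sigma> i" and "\<And>i j. i \<le> j \<Longrightarrow> j < k \<Longrightarrow> \<sigma> j \<le> \<sigma> i"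
    and "\<And>i. k \<le> i \<Longrightarrow> \<sigma> i = 0"
    and U: "\<And>i j. i < k \<Longrightarrow> j < k \<Longrightarrow> (\<Sum>l<k. U l i * U l j) = (if i = j then 1 else 0)"
    and V: "\<And>i j. i < k \<Longrightarrow> j < k \<Longrightarrow> (\<Sum>l<k. V l i * V l j) = (if i = j then 1 else 0)"
    and A: "\<And>i j. i < k \<Longrightarrow> j < k \<Longrightarrow> A i j = (\<Sum>l<k. U i l * \<sigma> l * V j l)"
  shows "is_singular_values k A \<sigma>"
  unfolding is_singular_values_def
proof (intro conjI)
  show "\<exists>U V. (\<forall>i<k. \<forall>j<k. (\<Sum>l<k. U l i * U l j) = (if i = j then 1 else 0)) \<and>
      (\<forall>i<k. \<forall>j<k. (\<Sum>l<k. V l i * V l j) = (if i = j then 1 else 0)) \<and>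
      (\<forall>i<k. \<forall>j<k. A i j = (\<Sum>l<k. U i l * \<sigma> l * V j l))"
    using U V A by blast
qed (use assms in auto)

no_notation Matrix.scalar_prod (infix \<open>\<bullet>\<close> 70)

definition orthonormal_family :: "nat \<Rightarrow> (nat \<Rightarrow> 'a::real_inner) \<Rightarrow> bool" where
  "orthonormal_family k E \<longleftrightarrow> (\<forall>i<k. \<forall>j<k. E i \<bullet> E j = (if i = j then 1 else 0))"

lemma orthonormal_basis_of_iff:
  "orthonormal_basis_of k L E \<longleftrightarrow> orthonormal_family k E \<and> span (E ` {..<k}) = L"
  by (simp add: orthonormal_basis_of_def orthonormal_family_def)

lemma orthonormal_family_expansion:
  assumes E: "orthonormal_family k E" and x: "x \<in> span (E ` {..<k})"
  shows "(\<Sum>i<k. (E i \<bullet> x) *\<^sub>R E i) = x"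
proof (rule vector_eq_dot_span[OF _ x])
  show "(\<Sum>i<k. (E i \<bullet> x) *\<^sub>R E i) \<in> span (E ` {..<k})"
    by (intro span_sum span_scale span_base) auto
  fix y assume "y \<in> E ` {..<k}"
  then obtain j where j: "j < k" "y = E j" by auto
  have "y \<bullet> (\<Sum>i<k. (E i \<bullet> x) *\<^sub>R E i) = (\<Sum>i<k. (E i \<bullet> x) * (E j \<bullet> E i))"
    using j by (simp add: inner_sum_right)
  also have "\<dots> = (\<Sum>i<k. if i = j then E j \<bullet> x else 0)"
    using E j by (intro sum.cong) (auto simp: orthonormal_family_def)
  also have "\<dots> = y \<bullet> x"
    using j by simp
  finally show "y \<bullet> (\<Sum>i<k. (E i \<bullet> x) *\<^sub>R E i) = y \<bullet> x" .
qed

lemma inner_eq_sum_orthonormal_family: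
  assumes "orthonormal_family k E" "x \<in> span (E ` {..<k})"
  shows "x \<bullet> y = (\<Sum>l<k. (E l \<bullet> x) * (E l \<bullet> y))"
proof -
  have "x \<bullet> y = (\<Sum>l<k. (E l \<bullet> x) *\<^sub>R E l) \<bullet> y"
    using orthonormal_family_expansion[OF assms] by simp
  then show ?thesis
    by (simp add: inner_sum_left)
qed

lemma is_singular_values_inner_bases:
  fixes E F w w' :: "nat \<Rightarrow> 'a::real_inner"
  assumes E: "orthonormal_family k E" "span (E ` {..<k}) = span (w ` {..<k})"
    and F: "orthonormal_family k F" "span (F ` {..<k}) = span (w' ` {..<k})"
    and w: "orthonormal_family k w" and w': "orthonormal_family k w'"
    and inner_w: "\<And>m n. m < k \<Longrightarrow> n < k \<Longrightarrow> w m \<bullet> w' n = (if m = n then c m else 0)"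
    and c_nonneg: "\<And>m. m < k \<Longrightarrow> 0 \<le> c m"
    and c_antimono: "\<And>m n. m \<le> n \<Longrightarrow> n < k \<Longrightarrow> c n \<le> c m"
  shows "is_singular_values k (\<lambda>i l. E i \<bullet> F l) (\<lambda>m. if m < k then c m else 0)"
proof -
  define U V where "U i m = E i \<bullet> w m" and "V l m = F l \<bullet> w' m" for i l m
  have in_span: "E i \<in> span (w ` {..<k})" "w i \<in> span (E ` {..<k})"
      "F i \<in> span (w' ` {..<k})" "w' i \<in> span (F ` {..<k})" if "i < k" for i
    using E(2) F(2) that by (metis imageI lessThan_iff span_base)+
  have U: "(\<Sum>l<k. U l i * U l j) = (if i = j then 1 else 0)" if "i < k" "j < k" for i j
    using inner_eq_sum_orthonormal_family[OF E(1) in_span(2)[OF that(1)], of "w j"] w that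
    unfolding U_def orthonormal_family_def by simp
  have V: "(\<Sum>l<k. V l i * V l j) = (if i = j then 1 else 0)" if "i < k" "j < k" for i j
    using inner_eq_sum_orthonormal_family[OF F(1) in_span(4)[OF that(1)], of "w' j"] w' that
    unfolding V_def orthonormal_family_def by simp
  have F_w: "F l \<bullet> w m = c m * V l m" if "m < k" "l < k" for m l
  proof -
    have "F l \<bullet> w m = (\<Sum>n<k. (w' n \<bullet> F l) * (w' n \<bullet> w m))"
      by (rule inner_eq_sum_orthonormal_family[OF w' in_span(3)[OF that(2)]])
    also have "\<dots> = (\<Sum>n<k. if m = n then V l n * c m else 0)"
      using that by (intro sum.cong) (auto simp: V_def inner_commute inner_w)
    also have "\<dots> = c m * V l m"
      using that by simp
    finally show ?thesis .
  qed
  have A: "E i \<bullet> F l = (\<Sum>m<k. U i m * c m * V l m)" if "i < k" "l < k" for i l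
  proof -
    have "E i \<bullet> F l = (\<Sum>m<k. (w m \<bullet> E i) * (w m \<bullet> F l))"
      by (rule inner_eq_sum_orthonormal_family[OF w in_span(1)[OF that(1)]])
    also have "\<dots> = (\<Sum>m<k. U i m * c m * V l m)"
    proof (rule sum.cong)
      fix m assume "m \<in> {..<k}"
      then show "(w m \<bullet> E i) * (w m \<bullet> F l) = U i m * c m * V l m"
        using that by (simp add: U_def F_w inner_commute[of "w m"])
    qed simp
    finally show ?thesis .
  qed
  show ?thesis
  proof (rule is_singular_valuesI[of k _ U V])
    show "E i \<bullet> F l = (\<Sum>m<k. U i m * (if m < k then c m else 0) * V l m)" if "i < k" "l < k" for i l
      using that by (simp add: A)
  qed (simp_all add: c_nonneg c_antimono U V)
qed

definition orthonormal_pair :: "nat \<Rightarrow> (nat \<Rightarrow> 'a::real_inner) \<Rightarrow> (nat \<Rightarrow> 'a) \<Rightarrow> bool" where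
  "orthonormal_pair p e f \<longleftrightarrow> (\<forall>i\<in>{1..p}. \<forall>j\<in>{1..p}.
     e i \<bullet> e j = (if i = j then 1 else 0) \<and> f i \<bullet> f j = (if i = j then 1 else 0) \<and> e i \<bullet> f j = 0)"

lemma orthonormal_pair_if_orthonormal_frame:
  assumes frame: "is_orthonormal_frame p q e f r" and "p \<le> q"
  shows "orthonormal_pair p e f"
  unfolding orthonormal_pair_def
proof (intro ballI conjI)
  fix i j assume i: "i \<in> {1..p}" and j: "j \<in> {1..p}"
  have frame_inner: "frame_fam p e f r x \<bullet> frame_fam p e f r y = (if x = y then 1 else 0)"
    if "x \<in> {1..p+q}" "y \<in> {1..p+q}" for x y
    using frame that unfolding is_orthonormal_frame_def by blast
  have e: "frame_fam p e f r x = e x" and f: "frame_fam p e f r (p + x) = f x" if "x \<in> {1..p}" for x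
    using that by (simp_all add: frame_fam_def)
  show "e i \<bullet> e j = (if i = j then 1 else 0)"
    using frame_inner[of i j] i j \<open>p \<le> q\<close> by (simp add: e)
  show "f i \<bullet> f j = (if i = j then 1 else 0)"
    using frame_inner[of "p + i" "p + j"] i j \<open>p \<le> q\<close> by (simp add: f)
  show "e i \<bullet> f j = 0"
    using frame_inner[of i "p + j"] i j \<open>p \<le> q\<close> by (simp add: e f)
qed

definition H_vector :: "(nat \<Rightarrow> real) \<Rightarrow> (nat \<Rightarrow> 'a::real_vector) \<Rightarrow> (nat \<Rightarrow> 'a) \<Rightarrow> real \<Rightarrow> nat \<Rightarrow> 'a" where
  "H_vector a e f s j = cos (a j * s) *\<^sub>R e j + sin (a j * s) *\<^sub>R f j"

lemma H_curve_eq_span: "H_curve p a e f s = span ((\<lambda>m. H_vector a e f s (Suc m)) ` {..<p})"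
proof -
  have Suc_image: "{1..p} = Suc ` {..<p}"
    by (simp add: image_Suc_lessThan)
  show ?thesis
    unfolding H_curve_def H_vector_def Suc_image image_image ..
qed

lemma inner_H_vector:
  assumes "orthonormal_pair p e f" "i \<in> {1..p}" "j \<in> {1..p}"
  shows "H_vector a e f s i \<bullet> H_vector a e f t j = (if i = j then cos (a i * (t - s)) else 0)"
proof -
  have "e i \<bullet> e j = (if i = j then 1 else 0)" "f i \<bullet> f j = (if i = j then 1 else 0)"
    "e i \<bullet> f j = 0" "f i \<bullet> e j = 0"
    using assms unfolding orthonormal_pair_def by (auto simp: inner_commute)
  then show ?thesis
    by (simp add: H_vector_def inner_add_left inner_add_right cos_diff right_diff_distrib)
qed

lemma orthonormal_basis_of_H_curve:
  assumes "orthonormal_pair p e f"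
  shows "orthonormal_basis_of p (H_curve p a e f s) (\<lambda>m. H_vector a e f s (Suc m))"
  using inner_H_vector[OF assms] by (simp add: orthonormal_basis_of_iff orthonormal_family_def H_curve_eq_span)

lemma invariant_angle_bounds:
  fixes a :: "nat \<Rightarrow> real" and p j :: nat
  assumes a_nonneg: "0 \<le> a 1" and a_mono: "\<And>i j. 1 \<le> i \<Longrightarrow> i \<le> j \<Longrightarrow> j \<le> p \<Longrightarrow> a i \<le> a j"
    and "s \<le> t" and near: "a p * (t - s) \<le> pi / 2" and j: "j \<in> {1..p}"
  shows "0 \<le> a j * (t - s)" "a j * (t - s) \<le> pi / 2"
proof -
  have "0 \<le> a j" "a j \<le> a p"
    using a_nonneg a_mono[of 1 j] a_mono[of j p] j by auto
  then show "0 \<le> a j * (t - s)" "a j * (t - s) \<le> pi / 2"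
    using \<open>s \<le> t\<close> near mult_right_mono[of "a j" "a p" "t - s"] by auto
qed

lemma is_singular_values_H_curve:
  assumes ef: "orthonormal_pair p e f"
    and a_nonneg: "0 \<le> a 1" and a_mono: "\<And>i j. 1 \<le> i \<Longrightarrow> i \<le> j \<Longrightarrow> j \<le> p \<Longrightarrow> a i \<le> a j"
    and "s \<le> t" and near: "a p * (t - s) \<le> pi / 2"
    and E: "orthonormal_basis_of p (H_curve p a e f s) E"
    and F: "orthonormal_basis_of p (H_curve p a e f t) F"
  shows "is_singular_values p (\<lambda>i l. E i \<bullet> F l) (\<lambda>m. if m < p then cos (a (Suc m) * (t - s)) else 0)"
proof (rule is_singular_values_inner_bases)
  have "orthonormal_basis_of p (H_curve p a e f u) (\<lambda>m. H_vector a e f u (Suc m))" for u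
    by (rule orthonormal_basis_of_H_curve[OF ef])
  with E F show "orthonormal_family p E" "orthonormal_family p F"
    "span (E ` {..<p}) = span ((\<lambda>m. H_vector a e f s (Suc m)) ` {..<p})"
    "span (F ` {..<p}) = span ((\<lambda>m. H_vector a e f t (Suc m)) ` {..<p})"
    "orthonormal_family p (\<lambda>m. H_vector a e f s (Suc m))"
    "orthonormal_family p (\<lambda>m. H_vector a e f t (Suc m))"
    by (simp_all add: orthonormal_basis_of_iff)
  show "H_vector a e f s (Suc m) \<bullet> H_vector a e f t (Suc n) = (if m = n then cos (a (Suc m) * (t - s)) else 0)"
    if "m < p" "n < p" for m n
    using inner_H_vector[OF ef] that by simp
  note bounds = invariant_angle_bounds[OF a_nonneg a_mono \<open>s \<le> t\<close> near]
  show "0 \<le> cos (a (Suc m) * (t - s))" if "m < p" for m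
    using bounds[of "Suc m"] that by (intro cos_ge_zero) auto
  show "cos (a (Suc n) * (t - s)) \<le> cos (a (Suc m) * (t - s))" if "m \<le> n" "n < p" for m n
    using bounds[of "Suc m"] bounds[of "Suc n"] a_mono[of "Suc m" "Suc n"] that \<open>s \<le> t\<close>
    by (intro cos_monotone_0_pi_le) (auto intro: mult_right_mono)
qed

lemma jordan_angle_H_curve:
  assumes ef: "orthonormal_pair p e f"
    and a_nonneg: "0 \<le> a 1" and a_mono: "\<And>i j. 1 \<le> i \<Longrightarrow> i \<le> j \<Longrightarrow> j \<le> p \<Longrightarrow> a i \<le> a j"
    and "s \<le> t" and near: "a p * (t - s) \<le> pi / 2" and j: "j \<in> {1..p}"
  shows "jordan_angle p j (H_curve p a e f s) (H_curve p a e f t) = a j * (t - s)"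
proof -
  have "orthonormal_basis_of p (H_curve p a e f u) (SOME E. orthonormal_basis_of p (H_curve p a e f u) E)" for u
    by (rule someI[where P = "orthonormal_basis_of p (H_curve p a e f u)"], rule orthonormal_basis_of_H_curve[OF ef])
  note sv = is_singular_values_H_curve[OF ef a_nonneg a_mono \<open>s \<le> t\<close> near this this]
  have "j - 1 < p" "Suc (j - 1) = j"
    using j by auto
  with sv have "jordan_angle p j (H_curve p a e f s) (H_curve p a e f t) = arccos (cos (a j * (t - s)))"
    by (simp add: jordan_angle_def singular_values_eqI)
  also have "\<dots> = a j * (t - s)"
    using invariant_angle_bounds[OF a_nonneg a_mono \<open>s \<le> t\<close> near j] pi_gt_zero
    by (intro arccos_cos) linarith+
  finally show ?thesis .
qed

theorem lemma12:
  fixes p q :: nat and a :: "nat \<Rightarrow> real"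
    and e f r :: "nat \<Rightarrow> real ^ 'n"
    and s1 s2 s3 :: real
  assumes dim: "CARD('n) = p + q"
    and pq: "p \<le> q"
    and a_nonneg: "0 \<le> a 1"
    and a_mono: "\<And>i j. 1 \<le> i \<Longrightarrow> i \<le> j \<Longrightarrow> j \<le> p \<Longrightarrow> a i \<le> a j"
    and frame: "is_orthonormal_frame p q e f r"
    and s12: "s1 < s2" and s23: "s2 < s3"
    and near12: "sufficiently_near p a s1 s2"
    and near13: "sufficiently_near p a s1 s3"
    and near23: "sufficiently_near p a s2 s3"
  shows "\<forall>j\<in>{1..p}.
    jordan_angle p j (H_curve p a e f s1) (H_curve p a e f s2)
    + jordan_angle p j (H_curve p a e f s2) (H_curve p a e f s3)
    = jordan_angle p j (H_curve p a e f s1) (H_curve p a e f s3)"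
proof
  fix j assume j: "j \<in> {1..p}"
  have ef: "orthonormal_pair p e f"
    using frame pq by (rule orthonormal_pair_if_orthonormal_frame)
  have angle: "jordan_angle p j (H_curve p a e f s) (H_curve p a e f t) = a j * (t - s)"
    if "s < t" "sufficiently_near p a s t" for s t
  proof (rule jordan_angle_H_curve[where a = a, OF ef a_nonneg a_mono])
    show "a p * (t - s) \<le> pi / 2"
      using that by (simp add: sufficiently_near_def abs_minus_commute)
  qed (use that j in auto)
  have "s1 < s3"
    using s12 s23 by simp
  then show "jordan_angle p j (H_curve p a e f s1) (H_curve p a e f s2)
    + jordan_angle p j (H_curve p a e f s2) (H_curve p a e f s3)
    = jordan_angle p j (H_curve p a e f s1) (H_curve p a e f s3)"
    by (simp add: angle s12 s23 near12 near23 near13 algebra_simps)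
qed

end
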